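(* Let $(M,d)$ be a metric space, $\mathsf{P}\subseteq M$ a set of $n$ points, $1\le\ell\le k\le n$ integers and $m=\lfloor k/\ell\rfloor$. Let $\sigma_{\mathrm{med}}=\min_{S\subseteq\mathsf{P},|S|=m}\sum_{p\in\mathsf{P}} d_S(p,1)$ and $\sigma_{\mathrm{opt}}=\min_{C'\subseteq\mathsf{P},|C'|=k}\sum_{p\in\mathsf{P}} d_{C'}(p,\ell)$. Then $\sigma_{\mathrm{med}}\le 2\sigma_{\mathrm{opt}}$.
   Context: For a finite set $S\subseteq M$, a point $p\in M$ and an integer $1\le i\le|S|$, $d_S(p,i)$ denotes the radius of the smallest closed ball centered at $p$ containing at least $i$ points of $S$ (distance to the $i$-th nearest point of $S$). *)

theory Defs
  imports "HOL-Analysis.Analysis"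
begin

text \<open>d_S(p,i): radius of the smallest closed ball centered at p containing
at least i points of S (distance to the i-th nearest point of S).\<close>
definition kth_dist :: "'a::metric_space set \<Rightarrow> 'a \<Rightarrow> nat \<Rightarrow> real" where
  "kth_dist S p i = Inf {r. i \<le> card (S \<inter> cball p r)}"

end

theory Submission
  imports Defs
begin

text \<open>Fix an optimal \<open>C\<close> and let \<open>r p = d\<^sub>C(p,l)\<close>, so that the ball of radius \<open>r p\<close>
around \<open>p\<close> contains \<open>l\<close> points of \<open>C\<close>. Pick points of \<open>P\<close> greedily in increasing order of
\<open>r\<close>, skipping every point whose ball meets the ball of a point already picked. The picked
balls are disjoint, so at most \<open>\<lfloor>k/l\<rfloor> = m\<close> points are picked; and every \<open>p\<close> was either
picked or skipped because of a picked \<open>t\<close> with \<open>r t \<le> r p\<close>, whence \<open>d(p,t) \<le> 2 r p\<close>.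
Padding the picked points to \<open>m\<close> points of \<open>P\<close> gives a 1-median solution of cost at most
\<open>2 \<sigma>\<^sub>o\<^sub>p\<^sub>t\<close>.\<close>

lemma kth_dist_le:
  assumes "1 \<le> i" "i \<le> card (S \<inter> cball p r)"
  shows "kth_dist S p i \<le> r"
  unfolding kth_dist_def
proof (rule cInf_lower)
  show "r \<in> {r. i \<le> card (S \<inter> cball p r)}"
    using assms by simp
  show "bdd_below {r. i \<le> card (S \<inter> cball p r)}"
  proof (rule bdd_belowI)
    fix x assume "x \<in> {r. i \<le> card (S \<inter> cball p r)}"
    then have "S \<inter> cball p x \<noteq> {}"
      using assms(1) by auto
    then show "0 \<le> x"
      by auto
  qed
qed

lemma kth_dist_1_le_dist:
  assumes "finite S" "s \<in> S"
  shows "kth_dist S p 1 \<le> dist p s"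
proof (rule kth_dist_le)
  have "s \<in> S \<inter> cball p (dist p s)"
    using assms(2) by simp
  then show "1 \<le> card (S \<inter> cball p (dist p s))"
    using assms(1) by (metis One_nat_def Suc_leI card_gt_0_iff empty_iff finite_Int)
qed simp

lemma card_cball_kth_dist:
  assumes "finite C" "1 \<le> l" "l \<le> card C"
  shows "l \<le> card (C \<inter> cball p (kth_dist C p l))"
proof -
  define R where "R = {r. l \<le> card (C \<inter> cball p r)}"
  define D where "D = R \<inter> dist p ` C"
  \<comment> \<open>Shrinking a radius in \<open>R\<close> to the farthest point of \<open>C\<close> inside the ball stays in \<open>R\<close>,
      so the infimum of \<open>R\<close> is the minimum of the finite set \<open>D\<close>.\<close>
  have shrink: "\<exists>d\<in>D. d \<le> r" if "r \<in> R" for r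
  proof -
    define E where "E = C \<inter> cball p r"
    have "E \<noteq> {}" "finite E"
      using that assms(1,2) unfolding R_def E_def by auto
    define d where "d = Max (dist p ` E)"
    have "d \<in> dist p ` E"
      unfolding d_def using \<open>E \<noteq> {}\<close> \<open>finite E\<close> by simp
    moreover have "d \<le> r"
      unfolding d_def using \<open>E \<noteq> {}\<close> \<open>finite E\<close> by (auto simp: E_def)
    moreover have "C \<inter> cball p d = E"
      using \<open>d \<le> r\<close> \<open>finite E\<close> unfolding d_def E_def by auto
    ultimately show ?thesis
      using that unfolding D_def R_def E_def by auto
  qed
  have "C \<inter> cball p (Max (dist p ` C)) = C"
    using assms(1) by auto
  then have "Max (dist p ` C) \<in> R"
    using assms(3) unfolding R_def by simp
  then have "D \<noteq> {}"
    using shrink by blast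
  moreover have "finite D"
    using assms(1) unfolding D_def by simp
  ultimately have "Min D \<in> R"
    using Min_in unfolding D_def by blast
  moreover have "Inf R = Min D"
  proof (rule cInf_eq_minimum)
    show "Min D \<le> r" if "r \<in> R" for r
      using shrink[OF that] \<open>finite D\<close> by (meson Min_le order_trans)
  qed fact
  ultimately show ?thesis
    unfolding kth_dist_def R_def by simp
qed

lemma greedy_disjoint_double_cover:
  fixes r :: "'a::metric_space \<Rightarrow> real"
  assumes "finite Q"
    and "\<And>q. q \<in> Q \<Longrightarrow> A q \<noteq> {}"
    and "\<And>q. q \<in> Q \<Longrightarrow> A q \<subseteq> cball q (r q)"
  shows "\<exists>T\<subseteq>Q. disjoint_family_on A T \<and> (\<forall>q\<in>Q. \<exists>t\<in>T. dist q t \<le> 2 * r q)"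
  using assms
proof (induction Q rule: finite_psubset_induct)
  case (psubset Q)
  show ?case
  proof (cases "Q = {}")
    case False
    obtain p where "p \<in> Q" and p_min: "\<And>q. q \<in> Q \<Longrightarrow> r p \<le> r q"
      using ex_is_arg_min_if_finite[OF psubset.hyps False, of r] by (auto simp: is_arg_min_linorder)
    define Q' where "Q' = {q\<in>Q. A q \<inter> A p = {}}"
    have "Q' \<subset> Q"
      using \<open>p \<in> Q\<close> psubset.prems(1) unfolding Q'_def by blast
    then obtain T where "T \<subseteq> Q'" "disjoint_family_on A T"
      and T_cover: "\<forall>q\<in>Q'. \<exists>t\<in>T. dist q t \<le> 2 * r q"
      using psubset.IH[of Q'] psubset.prems by blast
    have "disjoint_family_on A (insert p T)"
      using \<open>T \<subseteq> Q'\<close> \<open>disjoint_family_on A T\<close>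
      unfolding disjoint_family_on_def Q'_def by blast
    moreover have "\<exists>t\<in>insert p T. dist q t \<le> 2 * r q" if q: "q \<in> Q" for q
    proof (cases "q \<in> Q'")
      case False
      then obtain c where "c \<in> A q" "c \<in> A p"
        using q unfolding Q'_def by blast
      then have "dist q c \<le> r q" "dist p c \<le> r p"
        using psubset.prems(2)[OF q] psubset.prems(2)[OF \<open>p \<in> Q\<close>] by (auto simp: subset_iff)
      then have "dist q p \<le> 2 * r q"
        using p_min[OF q] dist_triangle2[of q p c] by linarith
      then show ?thesis
        by blast
    qed (use T_cover in blast)
    ultimately show ?thesis
      using \<open>p \<in> Q\<close> \<open>T \<subseteq> Q'\<close> \<open>Q' \<subset> Q\<close> by (intro exI[of _ "insert p T"]) auto
  qed (simp add: disjoint_family_on_def)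
qed

lemma card_mult_le_card_if_disjoint_family:
  assumes "finite C" "disjoint_family_on A T"
    and "\<And>t. t \<in> T \<Longrightarrow> A t \<subseteq> C" "\<And>t. t \<in> T \<Longrightarrow> l \<le> card (A t)"
  shows "card T * l \<le> card C"
proof (cases "finite T")
  case True
  have "card T * l = (\<Sum>t\<in>T. l)"
    by simp
  also have "\<dots> \<le> (\<Sum>t\<in>T. card (A t))"
    using assms(4) by (rule sum_mono)
  also have "\<dots> = card (\<Union>t\<in>T. A t)"
    using assms(1-3) True by (intro card_UN_disjoint'[symmetric]) (auto intro: finite_subset)
  also have "\<dots> \<le> card C"
    using assms(1,3) by (intro card_mono) auto
  finally show ?thesis .
qed simp

lemma sparse_double_cover:
  assumes "finite P" "C \<subseteq> P" "1 \<le> l" "l \<le> card C"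
  shows "\<exists>T\<subseteq>P. card T * l \<le> card C \<and> (\<forall>p\<in>P. \<exists>t\<in>T. dist p t \<le> 2 * kth_dist C p l)"
proof -
  have "finite C"
    using assms(1,2) by (rule finite_subset[rotated])
  define A where "A q = C \<inter> cball q (kth_dist C q l)" for q
  have A_card: "l \<le> card (A q)" for q
    unfolding A_def using card_cball_kth_dist[OF \<open>finite C\<close> assms(3,4)] .
  then have "A q \<noteq> {}" for q
    using assms(3) by (metis card.empty not_one_le_zero order_trans)
  then obtain T where "T \<subseteq> P" "disjoint_family_on A T"
    and T_cover: "\<forall>p\<in>P. \<exists>t\<in>T. dist p t \<le> 2 * kth_dist C p l"
    using greedy_disjoint_double_cover[OF assms(1), of A "\<lambda>q. kth_dist C q l"]
    unfolding A_def by blast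
  moreover have "card T * l \<le> card C"
    using card_mult_le_card_if_disjoint_family[OF \<open>finite C\<close> \<open>disjoint_family_on A T\<close> _ A_card]
    unfolding A_def by blast
  ultimately show ?thesis
    by blast
qed

theorem claim2:
  fixes P :: "'a::metric_space set" and n k l m :: nat
  assumes "finite P" and "card P = n"
    and "1 \<le> l" and "l \<le> k" and "k \<le> n"
    and "m = k div l"
  shows "Min ((\<lambda>S. \<Sum>p\<in>P. kth_dist S p 1) ` {S. S \<subseteq> P \<and> card S = m})
         \<le> 2 * Min ((\<lambda>C. \<Sum>p\<in>P. kth_dist C p l) ` {C. C \<subseteq> P \<and> card C = k})"
proof -
  let ?K = "{C. C \<subseteq> P \<and> card C = k}"
  let ?opt = "Min ((\<lambda>C. \<Sum>p\<in>P. kth_dist C p l) ` ?K)"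
  have "finite ?K"
    using assms(1) by simp
  moreover have "?K \<noteq> {}"
    using obtain_subset_with_card_n[of k P] assms(2,5) by auto
  ultimately have "?opt \<in> (\<lambda>C. \<Sum>p\<in>P. kth_dist C p l) ` ?K"
    by (intro Min_in) auto
  then obtain C where C: "C \<subseteq> P" "card C = k" and "?opt = (\<Sum>p\<in>P. kth_dist C p l)"
    by auto
  obtain T where "T \<subseteq> P" "card T * l \<le> k"
    and T_cover: "\<forall>p\<in>P. \<exists>t\<in>T. dist p t \<le> 2 * kth_dist C p l"
    using sparse_double_cover[OF assms(1) C(1) assms(3)] C(2) assms(4) by blast
  then have "card T \<le> m"
    using assms(3,6) by (simp add: less_eq_div_iff_mult_less_eq)
  moreover have "m \<le> card P"
    using assms(2,5,6) by (meson div_le_dividend order_trans)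
  ultimately obtain S where "T \<subseteq> S" "S \<subseteq> P" "card S = m"
    using exists_subset_between \<open>T \<subseteq> P\<close> assms(1) by blast
  have "finite S"
    using \<open>S \<subseteq> P\<close> assms(1) by (rule finite_subset)
  have "Min ((\<lambda>S. \<Sum>p\<in>P. kth_dist S p 1) ` {S. S \<subseteq> P \<and> card S = m})
        \<le> (\<Sum>p\<in>P. kth_dist S p 1)"
    using assms(1) \<open>S \<subseteq> P\<close> \<open>card S = m\<close> by (intro Min_le) auto
  also have "\<dots> \<le> (\<Sum>p\<in>P. 2 * kth_dist C p l)"
    using T_cover \<open>T \<subseteq> S\<close> kth_dist_1_le_dist[OF \<open>finite S\<close>]
    by (intro sum_mono) (meson order_trans subsetD)
  also have "\<dots> = 2 * ?opt"
    by (simp add: \<open>?opt = _\<close> sum_distrib_left)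
  finally show ?thesis .
qed

end
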